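(* Let $A=(A,\mu,\eta,\Delta,\varepsilon,S)$ be an involutory Hopf algebra in a symmetric monoidal category $\mathcal{C}$ satisfying (A1): there are an invertible object $I$, a universal left integral $\Lambda\colon I\to A$ and a universal right cointegral $\lambda\colon A\to I$ with $\lambda\Lambda=\mathrm{id}_I$. Then the map $$\Psi\colon \mathrm{Hom}_{\mathcal{C}}(A\otimes A,I)\to\mathrm{Hom}_{\mathcal{C}}(A\otimes I,I\otimes A),\qquad \Psi(e)=(e\otimes\mathrm{id}_A)(\mathrm{id}_A\otimes\Delta\Lambda),$$ is injective.
   Context: $\mathcal{C}$ symmetric monoidal with unit $\mathbb{1}$, symmetry $\tau$, constraints suppressed. An object $I$ is invertible if $I\otimes J\cong\mathbb{1}$ for some $J$. Involutory Hopf algebra: bialgebra with invertible antipode $S$, $S^2=\mathrm{id}_A$. A left integral is $\Lambda\colon I\to A$ with $\mu(\mathrm{id}_A\otimes\Lambda)=\varepsilon\otimes\Lambda$; a right cointegral is $\lambda\colon A\to I$ with $(\lambda\otimes\mathrm{id}_A)\Delta=\lambda\otimes\eta$. $\Lambda$ is universal if every left integral $X\to A$ factors uniquely through $\Lambda$ via a morphism $X\to I$; $\lambda$ is universal if every right cointegral $A\to X$ factors uniquely as $g'\lambda$ with $g'\colon I\to X$. *)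

theory Defs
  imports Main
begin

text \<open>A (strict) symmetric monoidal category, with associativity and unit
constraints suppressed (identities), as in the paper's convention.
Objects are all elements of type 'o; arrows are elements of type 'm satisfying arr.
cmp g f denotes the composite g after f.\<close>

record ('o, 'm) smc =
  arr :: "'m \<Rightarrow> bool"
  src :: "'m \<Rightarrow> 'o"
  tgt :: "'m \<Rightarrow> 'o"
  cmp :: "'m \<Rightarrow> 'm \<Rightarrow> 'm"
  ident :: "'o \<Rightarrow> 'm"
  otensor :: "'o \<Rightarrow> 'o \<Rightarrow> 'o"
  mtensor :: "'m \<Rightarrow> 'm \<Rightarrow> 'm"
  unit_ob :: "'o"
  symm :: "'o \<Rightarrow> 'o \<Rightarrow> 'm"

definition hom :: "('o, 'm) smc \<Rightarrow> 'o \<Rightarrow> 'o \<Rightarrow> 'm set" where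
  "hom C X Y = {f. arr C f \<and> src C f = X \<and> tgt C f = Y}"

locale ssmc =
  fixes C :: "('o, 'm) smc"
  assumes cmp_hom: "\<And>f g X Y Z. f \<in> hom C X Y \<Longrightarrow> g \<in> hom C Y Z \<Longrightarrow> cmp C g f \<in> hom C X Z"
    and cmp_assoc: "\<And>f g h X Y Z W. f \<in> hom C X Y \<Longrightarrow> g \<in> hom C Y Z \<Longrightarrow> h \<in> hom C Z W \<Longrightarrow>
                  cmp C h (cmp C g f) = cmp C (cmp C h g) f"
    and ident_hom: "\<And>X. ident C X \<in> hom C X X"
    and ident_left: "\<And>f. arr C f \<Longrightarrow> cmp C (ident C (tgt C f)) f = f"
    and ident_right: "\<And>f. arr C f \<Longrightarrow> cmp C f (ident C (src C f)) = f"
    and mtensor_hom: "\<And>f g X Y X' Y'. f \<in> hom C X Y \<Longrightarrow> g \<in> hom C X' Y' \<Longrightarrow>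
                  mtensor C f g \<in> hom C (otensor C X X') (otensor C Y Y')"
    and mtensor_cmp: "\<And>f g f' g' X Y Z X' Y' Z'. f \<in> hom C X Y \<Longrightarrow> g \<in> hom C Y Z \<Longrightarrow>
                  f' \<in> hom C X' Y' \<Longrightarrow> g' \<in> hom C Y' Z' \<Longrightarrow>
                  mtensor C (cmp C g f) (cmp C g' f') = cmp C (mtensor C g g') (mtensor C f f')"
    and mtensor_ident: "\<And>X Y. mtensor C (ident C X) (ident C Y) = ident C (otensor C X Y)"
    and otensor_assoc: "\<And>X Y Z. otensor C X (otensor C Y Z) = otensor C (otensor C X Y) Z"
    and otensor_unit_left: "\<And>X. otensor C (unit_ob C) X = X"
    and otensor_unit_right: "\<And>X. otensor C X (unit_ob C) = X"
    and mtensor_assoc: "\<And>f g h. arr C f \<Longrightarrow> arr C g \<Longrightarrow> arr C h \<Longrightarrow>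
                  mtensor C f (mtensor C g h) = mtensor C (mtensor C f g) h"
    and mtensor_unit_left: "\<And>f. arr C f \<Longrightarrow> mtensor C (ident C (unit_ob C)) f = f"
    and mtensor_unit_right: "\<And>f. arr C f \<Longrightarrow> mtensor C f (ident C (unit_ob C)) = f"
    and symm_hom: "\<And>X Y. symm C X Y \<in> hom C (otensor C X Y) (otensor C Y X)"
    and symm_natural: "\<And>f g X X' Y Y'. f \<in> hom C X X' \<Longrightarrow> g \<in> hom C Y Y' \<Longrightarrow>
                  cmp C (symm C X' Y') (mtensor C f g) = cmp C (mtensor C g f) (symm C X Y)"
    and symm_inv: "\<And>X Y. cmp C (symm C Y X) (symm C X Y) = ident C (otensor C X Y)"
    and symm_hexagon: "\<And>X Y Z. symm C X (otensor C Y Z) =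
                  cmp C (mtensor C (ident C Y) (symm C X Z)) (mtensor C (symm C X Y) (ident C Z))"

definition involutory_hopf ::
  "('o, 'm) smc \<Rightarrow> 'o \<Rightarrow> 'm \<Rightarrow> 'm \<Rightarrow> 'm \<Rightarrow> 'm \<Rightarrow> 'm \<Rightarrow> bool" where
  "involutory_hopf C A mu eta delta eps S \<longleftrightarrow>
     (let I = unit_ob C; T = otensor C; M = mtensor C; c = cmp C; i = ident C in
     mu \<in> hom C (T A A) A \<and> eta \<in> hom C I A \<and> delta \<in> hom C A (T A A) \<and>
     eps \<in> hom C A I \<and> S \<in> hom C A A \<and>
     \<comment> \<open>algebra\<close>
     c mu (M mu (i A)) = c mu (M (i A) mu) \<and>
     c mu (M eta (i A)) = i A \<and> c mu (M (i A) eta) = i A \<and>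
     \<comment> \<open>coalgebra\<close>
     c (M delta (i A)) delta = c (M (i A) delta) delta \<and>
     c (M eps (i A)) delta = i A \<and> c (M (i A) eps) delta = i A \<and>
     \<comment> \<open>bialgebra compatibility\<close>
     c delta mu = c (M mu mu) (c (M (M (i A) (symm C A A)) (i A)) (M delta delta)) \<and>
     c delta eta = M eta eta \<and>
     c eps mu = M eps eps \<and>
     c eps eta = i I \<and>
     \<comment> \<open>antipode\<close>
     c mu (c (M S (i A)) delta) = c eta eps \<and>
     c mu (c (M (i A) S) delta) = c eta eps \<and>
     \<comment> \<open>invertible, involutory antipode\<close>
     (\<exists>S'. S' \<in> hom C A A \<and> c S S' = i A \<and> c S' S = i A) \<and>
     c S S = i A)"

definition invertible_obj :: "('o, 'm) smc \<Rightarrow> 'o \<Rightarrow> bool" where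
  "invertible_obj C I \<longleftrightarrow>
     (\<exists>J f g. f \<in> hom C (otensor C I J) (unit_ob C) \<and> g \<in> hom C (unit_ob C) (otensor C I J) \<and>
        cmp C g f = ident C (otensor C I J) \<and> cmp C f g = ident C (unit_ob C))"

definition left_integral :: "('o, 'm) smc \<Rightarrow> 'o \<Rightarrow> 'm \<Rightarrow> 'm \<Rightarrow> 'o \<Rightarrow> 'm \<Rightarrow> bool" where
  "left_integral C A mu eps X L \<longleftrightarrow>
     L \<in> hom C X A \<and> cmp C mu (mtensor C (ident C A) L) = mtensor C eps L"

definition right_cointegral :: "('o, 'm) smc \<Rightarrow> 'o \<Rightarrow> 'm \<Rightarrow> 'm \<Rightarrow> 'o \<Rightarrow> 'm \<Rightarrow> bool" where
  "right_cointegral C A delta eta X l \<longleftrightarrow>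
     l \<in> hom C A X \<and> cmp C (mtensor C l (ident C A)) delta = mtensor C l eta"

definition universal_left_integral ::
  "('o, 'm) smc \<Rightarrow> 'o \<Rightarrow> 'm \<Rightarrow> 'm \<Rightarrow> 'o \<Rightarrow> 'm \<Rightarrow> bool" where
  "universal_left_integral C A mu eps I L \<longleftrightarrow>
     left_integral C A mu eps I L \<and>
     (\<forall>X L'. left_integral C A mu eps X L' \<longrightarrow> (\<exists>!g. g \<in> hom C X I \<and> cmp C L g = L'))"

definition universal_right_cointegral ::
  "('o, 'm) smc \<Rightarrow> 'o \<Rightarrow> 'm \<Rightarrow> 'm \<Rightarrow> 'o \<Rightarrow> 'm \<Rightarrow> bool" where
  "universal_right_cointegral C A delta eta I l \<longleftrightarrow>
     right_cointegral C A delta eta I l \<and>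
     (\<forall>X l'. right_cointegral C A delta eta X l' \<longrightarrow> (\<exists>!g. g \<in> hom C I X \<and> cmp C g l = l'))"

definition Psi :: "('o, 'm) smc \<Rightarrow> 'o \<Rightarrow> 'm \<Rightarrow> 'm \<Rightarrow> 'm \<Rightarrow> 'm" where
  "Psi C A delta L e =
     cmp C (mtensor C e (ident C A)) (mtensor C (ident C A) (cmp C delta L))"

end

theory Submission
  imports Defs
begin

text \<open>
Write \<open>\<gamma> = (id \<otimes> \<lambda>) \<Delta> \<Lambda> : I \<rightarrow> A \<otimes> I\<close>. Since \<open>(id \<otimes> \<lambda>) \<Delta>\<close> is again a right cointegral, universality
of \<open>\<lambda>\<close> together with \<open>\<lambda>\<Lambda> = id\<close> gives \<open>\<gamma> \<lambda> = (id \<otimes> \<lambda>) \<Delta>\<close>, and from this \<open>\<gamma>\<close> behaves like a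
coaction: it is coassociative, counital and has the antipode as an inverse. Hence
\<open>R = (\<mu> \<otimes> id)(id \<otimes> \<gamma>)\<close> is an automorphism of \<open>A \<otimes> I\<close>. On the other hand the integral satisfies
\<open>\<Lambda>\<^sub>1 \<otimes> a\<Lambda>\<^sub>2 = S(a)\<Lambda>\<^sub>1 \<otimes> \<Lambda>\<^sub>2\<close>, so pairing the last tensor factor of \<open>\<Psi>(e) \<otimes> S\<close> with \<open>\<lambda>\<mu>\<tau>\<close>
produces \<open>(e \<otimes> id)(id \<otimes> R)\<close>. Thus \<open>\<Psi>(e)\<close> determines \<open>e \<otimes> id\<^sub>I\<close>, and tensoring with the
invertible object \<open>I\<close> is faithful.
\<close>

context ssmc begin

abbreviation Cmp (infixr "\<cdot>" 55) where "g \<cdot> f \<equiv> cmp C g f"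
abbreviation Ten (infixr "\<otimes>" 60) where "f \<otimes> g \<equiv> mtensor C f g"
abbreviation OTen (infixr "\<odot>" 60) where "X \<odot> Y \<equiv> otensor C X Y"
abbreviation Idn ("\<one>") where "\<one> X \<equiv> ident C X"
abbreviation U where "U \<equiv> unit_ob C"
abbreviation Ar where "Ar f \<equiv> arr C f"
abbreviation Sr where "Sr f \<equiv> src C f"
abbreviation Tg where "Tg f \<equiv> tgt C f"

lemma hom_iff: "f \<in> hom C X Y \<longleftrightarrow> Ar f \<and> Sr f = X \<and> Tg f = Y"
  by (simp add: hom_def)

lemma cmp_typing:
  assumes "Ar f" "Ar g" "Sr g = Tg f"
  shows "Ar (g \<cdot> f) \<and> Sr (g \<cdot> f) = Sr f \<and> Tg (g \<cdot> f) = Tg g"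
  using cmp_hom[of f "Sr f" "Tg f" g "Tg g"] assms by (simp add: hom_iff)

lemma arr_cmp [simp]: "Ar f \<Longrightarrow> Ar g \<Longrightarrow> Sr g = Tg f \<Longrightarrow> Ar (g \<cdot> f)"
  and src_cmp [simp]: "Ar f \<Longrightarrow> Ar g \<Longrightarrow> Sr g = Tg f \<Longrightarrow> Sr (g \<cdot> f) = Sr f"
  and tgt_cmp [simp]: "Ar f \<Longrightarrow> Ar g \<Longrightarrow> Sr g = Tg f \<Longrightarrow> Tg (g \<cdot> f) = Tg g"
  using cmp_typing by blast+

lemma tensor_typing:
  assumes "Ar f" "Ar g"
  shows "Ar (f \<otimes> g) \<and> Sr (f \<otimes> g) = Sr f \<odot> Sr g \<and> Tg (f \<otimes> g) = Tg f \<odot> Tg g"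
  using mtensor_hom[of f "Sr f" "Tg f" g "Sr g" "Tg g"] assms by (simp add: hom_iff)

lemma arr_tensor [simp]: "Ar f \<Longrightarrow> Ar g \<Longrightarrow> Ar (f \<otimes> g)"
  and src_tensor [simp]: "Ar f \<Longrightarrow> Ar g \<Longrightarrow> Sr (f \<otimes> g) = Sr f \<odot> Sr g"
  and tgt_tensor [simp]: "Ar f \<Longrightarrow> Ar g \<Longrightarrow> Tg (f \<otimes> g) = Tg f \<odot> Tg g"
  using tensor_typing by blast+

lemma arr_ident [simp]: "Ar (\<one> X)"
  and src_ident [simp]: "Sr (\<one> X) = X"
  and tgt_ident [simp]: "Tg (\<one> X) = X"
  using ident_hom[of X] by (auto simp: hom_iff)

lemma arr_symm [simp]: "Ar (symm C X Y)"
  and src_symm [simp]: "Sr (symm C X Y) = X \<odot> Y"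
  and tgt_symm [simp]: "Tg (symm C X Y) = Y \<odot> X"
  using symm_hom[of X Y] by (auto simp: hom_iff)

declare otensor_assoc [simp] otensor_unit_left [simp] otensor_unit_right [simp]

lemma comp_assoc [simp]:
  "Ar f \<Longrightarrow> Ar g \<Longrightarrow> Ar h \<Longrightarrow> Sr g = Tg f \<Longrightarrow> Sr h = Tg g \<Longrightarrow> (h \<cdot> g) \<cdot> f = h \<cdot> g \<cdot> f"
  using cmp_assoc[of f "Sr f" "Tg f" g "Tg g" h "Tg h"] by (simp add: hom_iff)

lemma comp_eq_extend:
  "a \<cdot> b = c \<Longrightarrow> Ar r \<Longrightarrow> Ar a \<Longrightarrow> Ar b \<Longrightarrow> Sr a = Tg b \<Longrightarrow> Sr b = Tg r \<Longrightarrow> a \<cdot> b \<cdot> r = c \<cdot> r"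
  by (metis comp_assoc)

lemma interchange:
  "Ar f \<Longrightarrow> Ar g \<Longrightarrow> Sr g = Tg f \<Longrightarrow> Ar f' \<Longrightarrow> Ar g' \<Longrightarrow> Sr g' = Tg f' \<Longrightarrow>
   (g \<cdot> f) \<otimes> (g' \<cdot> f') = (g \<otimes> g') \<cdot> (f \<otimes> f')"
  using mtensor_cmp[of f "Sr f" "Tg f" g "Tg g" f' "Sr f'" "Tg f'" g' "Tg g'"] by (simp add: hom_iff)

lemma ident_comp [simp]: "Ar f \<Longrightarrow> Tg f = Y \<Longrightarrow> \<one> Y \<cdot> f = f"
  using ident_left by blast

lemma comp_ident [simp]: "Ar f \<Longrightarrow> Sr f = X \<Longrightarrow> f \<cdot> \<one> X = f"
  using ident_right by blast

lemma tensor_assoc [simp]: "Ar f \<Longrightarrow> Ar g \<Longrightarrow> Ar h \<Longrightarrow> (f \<otimes> g) \<otimes> h = f \<otimes> g \<otimes> h"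
  using mtensor_assoc by simp

lemma tensor_ident [simp]: "\<one> X \<otimes> \<one> Y = \<one> (X \<odot> Y)"
  by (rule mtensor_ident)

lemma tensor_ident_assoc [simp]: "Ar f \<Longrightarrow> \<one> X \<otimes> \<one> Y \<otimes> f = \<one> (X \<odot> Y) \<otimes> f"
  by (metis arr_ident tensor_assoc tensor_ident)

lemma tensor_unit_ident_left [simp]: "Ar f \<Longrightarrow> \<one> U \<otimes> f = f"
  by (rule mtensor_unit_left)

lemma tensor_unit_ident_right [simp]: "Ar f \<Longrightarrow> f \<otimes> \<one> U = f"
  by (rule mtensor_unit_right)

lemma comp_tensor_left:
  "Ar f \<Longrightarrow> Ar g \<Longrightarrow> Sr g = Tg f \<Longrightarrow> Ar h \<Longrightarrow> (g \<cdot> f) \<otimes> h = (g \<otimes> h) \<cdot> (f \<otimes> \<one> (Sr h))"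
  using interchange[of f g "\<one> (Sr h)" h] by simp

lemma comp_tensor_left':
  "Ar f \<Longrightarrow> Ar g \<Longrightarrow> Sr g = Tg f \<Longrightarrow> Ar h \<Longrightarrow> (g \<cdot> f) \<otimes> h = (g \<otimes> \<one> (Tg h)) \<cdot> (f \<otimes> h)"
  using interchange[of f g h "\<one> (Tg h)"] by simp

lemma comp_tensor_right:
  "Ar f \<Longrightarrow> Ar g \<Longrightarrow> Sr g = Tg f \<Longrightarrow> Ar h \<Longrightarrow> h \<otimes> (g \<cdot> f) = (h \<otimes> g) \<cdot> (\<one> (Sr h) \<otimes> f)"
  using interchange[of "\<one> (Sr h)" h f g] by simp

lemma comp_tensor_right':
  "Ar f \<Longrightarrow> Ar g \<Longrightarrow> Sr g = Tg f \<Longrightarrow> Ar h \<Longrightarrow> h \<otimes> (g \<cdot> f) = (\<one> (Tg h) \<otimes> g) \<cdot> (h \<otimes> f)"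
  using interchange[of h "\<one> (Tg h)" f g] by simp

lemma tensor_as_comp:
  "Ar f \<Longrightarrow> Ar g \<Longrightarrow> f \<otimes> g = (f \<otimes> \<one> (Tg g)) \<cdot> (\<one> (Sr f) \<otimes> g)"
  using interchange[of "\<one> (Sr f)" f g "\<one> (Tg g)"] by simp

lemma tensor_as_comp':
  "Ar f \<Longrightarrow> Ar g \<Longrightarrow> f \<otimes> g = (\<one> (Tg f) \<otimes> g) \<cdot> (f \<otimes> \<one> (Sr g))"
  using interchange[of f "\<one> (Tg f)" "\<one> (Sr g)" g] by simp

lemma tensor_slide:
  "Ar f \<Longrightarrow> Ar g \<Longrightarrow> (\<one> (Tg f) \<otimes> g) \<cdot> (f \<otimes> \<one> (Sr g)) = (f \<otimes> \<one> (Tg g)) \<cdot> (\<one> (Sr f) \<otimes> g)"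
  using tensor_as_comp tensor_as_comp' by metis

lemma tensor_invertible_cancel:
  assumes "invertible_obj C I" and e: "e \<in> hom C X I" and e': "e' \<in> hom C X I"
    and eq: "e \<otimes> \<one> I = e' \<otimes> \<one> I"
  shows "e = e'"
proof -
  obtain J f g where f: "f \<in> hom C (I \<odot> J) U" and g: "g \<in> hom C U (I \<odot> J)"
    and fg: "f \<cdot> g = \<one> U"
    using assms(1) unfolding invertible_obj_def by blast
  have tf: "Ar f" "Sr f = I \<odot> J" "Tg f = U" and tg: "Ar g" "Sr g = U" "Tg g = I \<odot> J"
    using f g by (auto simp: hom_iff)
  have recover: "(\<one> I \<otimes> f) \<cdot> ((h \<otimes> \<one> I) \<otimes> \<one> J) \<cdot> (\<one> X \<otimes> g) = h" if "h \<in> hom C X I" for h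
  proof -
    have th: "Ar h" "Sr h = X" "Tg h = I" using that by (auto simp: hom_iff)
    have "(h \<otimes> \<one> I) \<otimes> \<one> J = h \<otimes> \<one> (I \<odot> J)" using th by simp
    moreover have "(h \<otimes> \<one> (I \<odot> J)) \<cdot> (\<one> X \<otimes> g) = h \<otimes> g"
      using interchange[of "\<one> X" h g "\<one> (I \<odot> J)"] th tg by simp
    moreover have "(\<one> I \<otimes> f) \<cdot> (h \<otimes> g) = h \<otimes> (f \<cdot> g)"
      using interchange[of h "\<one> I" g f] th tg tf by simp
    ultimately show ?thesis using th by (simp add: fg)
  qed
  show ?thesis using recover[OF e] recover[OF e'] eq by metis
qed

end

locale hopf_integrals = ssmc C for C :: "('o, 'm) smc" +
  fixes A I :: 'o and mu eta delta eps S L l :: 'm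
  assumes hopf: "involutory_hopf C A mu eta delta eps S"
    and integral: "left_integral C A mu eps I L"
    and cointegral: "universal_right_cointegral C A delta eta I l"
    and l_L: "l \<cdot> L = \<one> I"
begin

lemma typing [simp]:
  "Ar mu" "Sr mu = A \<odot> A" "Tg mu = A" "Ar eta" "Sr eta = U" "Tg eta = A"
  "Ar delta" "Sr delta = A" "Tg delta = A \<odot> A" "Ar eps" "Sr eps = A" "Tg eps = U"
  "Ar S" "Sr S = A" "Tg S = A" "Ar L" "Sr L = I" "Tg L = A" "Ar l" "Sr l = A" "Tg l = I"
  using hopf integral cointegral
  unfolding involutory_hopf_def left_integral_def universal_right_cointegral_def
    right_cointegral_def Let_def by (auto simp: hom_iff)

lemma mu_assoc: "mu \<cdot> (mu \<otimes> \<one> A) = mu \<cdot> (\<one> A \<otimes> mu)"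
  and mu_eta_left: "mu \<cdot> (eta \<otimes> \<one> A) = \<one> A"
  and mu_eta_right: "mu \<cdot> (\<one> A \<otimes> eta) = \<one> A"
  and delta_coassoc: "(delta \<otimes> \<one> A) \<cdot> delta = (\<one> A \<otimes> delta) \<cdot> delta"
  and eps_delta_left: "(eps \<otimes> \<one> A) \<cdot> delta = \<one> A"
  and eps_delta_right: "(\<one> A \<otimes> eps) \<cdot> delta = \<one> A"
  and delta_mu: "delta \<cdot> mu = (mu \<otimes> mu) \<cdot> (\<one> A \<otimes> symm C A A \<otimes> \<one> A) \<cdot> (delta \<otimes> delta)"
  and antipode_left: "mu \<cdot> (S \<otimes> \<one> A) \<cdot> delta = eta \<cdot> eps"
  and S_S: "S \<cdot> S = \<one> A"
  using hopf unfolding involutory_hopf_def Let_def by auto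

lemma integral_eq: "mu \<cdot> (\<one> A \<otimes> L) = eps \<otimes> L"
  using integral unfolding left_integral_def by simp

lemma cointegral_eq: "(l \<otimes> \<one> A) \<cdot> delta = l \<otimes> eta"
  using cointegral unfolding universal_right_cointegral_def right_cointegral_def by simp

abbreviation "tau \<equiv> symm C A A"

definition "DL = delta \<cdot> L"
definition "coact = (\<one> A \<otimes> l) \<cdot> DL"

lemma DL_typing [simp]: "Ar DL" "Sr DL = I" "Tg DL = A \<odot> A"
  and coact_typing [simp]: "Ar coact" "Sr coact = I" "Tg coact = A \<odot> I"
  by (auto simp: DL_def coact_def)

lemma right_cointegral_delta_l: "right_cointegral C A delta eta (A \<odot> I) ((\<one> A \<otimes> l) \<cdot> delta)"
proof -
  have "(((\<one> A \<otimes> l) \<cdot> delta) \<otimes> \<one> A) \<cdot> delta = (\<one> A \<otimes> l \<otimes> \<one> A) \<cdot> (delta \<otimes> \<one> A) \<cdot> delta"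
    by (subst comp_tensor_left) auto
  also have "\<dots> = (\<one> A \<otimes> l \<otimes> \<one> A) \<cdot> (\<one> A \<otimes> delta) \<cdot> delta"
    by (simp add: delta_coassoc)
  also have "\<dots> = (\<one> A \<otimes> ((l \<otimes> \<one> A) \<cdot> delta)) \<cdot> delta"
    by (subst comp_tensor_right) auto
  also have "\<dots> = ((\<one> A \<otimes> l) \<cdot> delta) \<otimes> eta"
    by (subst comp_tensor_left) (auto simp: cointegral_eq)
  finally show ?thesis
    unfolding right_cointegral_def by (simp add: hom_iff)
qed

text \<open>The factorisation of \<open>(id \<otimes> \<lambda>) \<Delta>\<close> through \<open>\<lambda>\<close> must be \<open>coact\<close>, because \<open>\<lambda>\<Lambda> = id\<close>.\<close>

lemma coact_l: "coact \<cdot> l = (\<one> A \<otimes> l) \<cdot> delta"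
proof -
  obtain g where g: "g \<in> hom C I (A \<odot> I)" "g \<cdot> l = (\<one> A \<otimes> l) \<cdot> delta"
    using cointegral right_cointegral_delta_l unfolding universal_right_cointegral_def by blast
  have "coact = ((\<one> A \<otimes> l) \<cdot> delta) \<cdot> L" by (simp add: coact_def DL_def)
  also have "\<dots> = (g \<cdot> l) \<cdot> L" using g by simp
  also have "\<dots> = g" using g(1) by (simp add: hom_iff l_L)
  finally show ?thesis using g by simp
qed

lemma coact_coassoc: "(\<one> A \<otimes> coact) \<cdot> coact = (delta \<otimes> \<one> I) \<cdot> coact"
proof -
  have "(\<one> A \<otimes> coact) \<cdot> coact = (\<one> A \<otimes> coact) \<cdot> (\<one> A \<otimes> l) \<cdot> delta \<cdot> L"
    by (simp add: coact_def DL_def)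
  also have "\<dots> = (\<one> A \<otimes> (coact \<cdot> l)) \<cdot> delta \<cdot> L"
    by (subst comp_tensor_right) auto
  also have "\<dots> = (\<one> (A \<odot> A) \<otimes> l) \<cdot> (\<one> A \<otimes> delta) \<cdot> delta \<cdot> L"
    by (simp add: coact_l) (subst comp_tensor_right, auto)
  also have "\<dots> = (\<one> (A \<odot> A) \<otimes> l) \<cdot> (delta \<otimes> \<one> A) \<cdot> delta \<cdot> L"
    by (simp add: comp_eq_extend[OF delta_coassoc[symmetric]])
  also have "\<dots> = (delta \<otimes> \<one> I) \<cdot> coact"
    using comp_eq_extend[OF tensor_slide[of delta l], of "delta \<cdot> L"] by (simp add: coact_def DL_def)
  finally show ?thesis .
qed

lemma coact_counit: "(eps \<otimes> \<one> I) \<cdot> coact = \<one> I"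
proof -
  have slide: "(eps \<otimes> \<one> I) \<cdot> (\<one> A \<otimes> l) = l \<cdot> (eps \<otimes> \<one> A)"
    using tensor_slide[of eps l] by simp
  show ?thesis
    by (simp add: coact_def DL_def comp_eq_extend[OF slide, of "delta \<cdot> L"]
        comp_eq_extend[OF eps_delta_left, of L] l_L)
qed

lemma coact_antipode: "(mu \<otimes> \<one> I) \<cdot> (S \<otimes> coact) \<cdot> coact = eta \<otimes> \<one> I"
proof -
  have "(mu \<otimes> \<one> I) \<cdot> (S \<otimes> coact) \<cdot> coact
      = (mu \<otimes> \<one> I) \<cdot> (S \<otimes> \<one> (A \<odot> I)) \<cdot> (\<one> A \<otimes> coact) \<cdot> coact"
    using tensor_as_comp[of S coact] by simp
  also have "\<dots> = ((mu \<cdot> (S \<otimes> \<one> A) \<cdot> delta) \<otimes> \<one> I) \<cdot> coact"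
    by (simp add: coact_coassoc comp_tensor_left)
  also have "\<dots> = eta \<otimes> \<one> I"
    by (simp add: antipode_left comp_tensor_left coact_counit)
  finally show ?thesis .
qed

definition "twist = (mu \<otimes> \<one> I) \<cdot> (\<one> A \<otimes> coact)"
definition "twist_inv = (mu \<otimes> \<one> I) \<cdot> (\<one> A \<otimes> ((S \<otimes> \<one> I) \<cdot> coact))"

lemma twist_typing [simp]: "Ar twist" "Sr twist = A \<odot> I" "Tg twist = A \<odot> I"
  and twist_inv_typing [simp]: "Ar twist_inv" "Sr twist_inv = A \<odot> I" "Tg twist_inv = A \<odot> I"
  by (auto simp: twist_def twist_inv_def)

lemma mu_assoc_tensor: "(mu \<otimes> \<one> I) \<cdot> (mu \<otimes> \<one> (A \<odot> I)) = (mu \<otimes> \<one> I) \<cdot> (\<one> A \<otimes> mu \<otimes> \<one> I)"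
proof -
  have "(mu \<otimes> \<one> I) \<cdot> (mu \<otimes> \<one> (A \<odot> I)) = (mu \<cdot> (mu \<otimes> \<one> A)) \<otimes> \<one> I"
    by (simp add: comp_tensor_left)
  also have "\<dots> = (mu \<otimes> \<one> I) \<cdot> (\<one> A \<otimes> mu \<otimes> \<one> I)"
    by (simp add: mu_assoc comp_tensor_left)
  finally show ?thesis .
qed

lemma twist_twist_inv: "twist \<cdot> twist_inv = \<one> (A \<odot> I)"
proof -
  have slide: "(\<one> A \<otimes> coact) \<cdot> (mu \<otimes> \<one> I) = (mu \<otimes> \<one> (A \<odot> I)) \<cdot> (\<one> (A \<odot> A) \<otimes> coact)"
    using tensor_slide[of mu coact] by simp
  have "twist \<cdot> twist_inv
      = (mu \<otimes> \<one> I) \<cdot> (mu \<otimes> \<one> (A \<odot> I)) \<cdot> (\<one> (A \<odot> A) \<otimes> coact) \<cdot> (\<one> A \<otimes> ((S \<otimes> \<one> I) \<cdot> coact))"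
    by (simp add: twist_def twist_inv_def comp_eq_extend[OF slide])
  also have "\<dots> = (mu \<otimes> \<one> I) \<cdot> (\<one> A \<otimes> ((mu \<otimes> \<one> I) \<cdot> (\<one> A \<otimes> coact) \<cdot> (S \<otimes> \<one> I) \<cdot> coact))"
    by (simp add: comp_eq_extend[OF mu_assoc_tensor] comp_tensor_right)
  also have "\<dots> = (mu \<otimes> \<one> I) \<cdot> (\<one> A \<otimes> ((mu \<otimes> \<one> I) \<cdot> (S \<otimes> coact) \<cdot> coact))"
    using comp_eq_extend[OF tensor_as_comp'[of S coact, symmetric]] by simp
  also have "\<dots> = (mu \<cdot> (\<one> A \<otimes> eta)) \<otimes> \<one> I"
    by (simp add: coact_antipode comp_tensor_left)
  also have "\<dots> = \<one> (A \<odot> I)"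
    by (simp add: mu_eta_right)
  finally show ?thesis .
qed

lemma delta_integral: "(mu \<otimes> mu) \<cdot> (\<one> A \<otimes> tau \<otimes> \<one> A) \<cdot> (delta \<otimes> DL) = eps \<otimes> DL"
proof -
  have "eps \<otimes> DL = delta \<cdot> mu \<cdot> (\<one> A \<otimes> L)"
    by (simp add: DL_def comp_tensor_right' integral_eq)
  also have "\<dots> = (mu \<otimes> mu) \<cdot> (\<one> A \<otimes> tau \<otimes> \<one> A) \<cdot> (delta \<otimes> delta) \<cdot> (\<one> A \<otimes> L)"
    by (simp add: comp_eq_extend[OF delta_mu])
  also have "\<dots> = (mu \<otimes> mu) \<cdot> (\<one> A \<otimes> tau \<otimes> \<one> A) \<cdot> (delta \<otimes> DL)"
    by (simp add: DL_def comp_tensor_right)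
  finally show ?thesis by simp
qed

lemma S_DL_counit_expand: "S \<otimes> DL = (S \<otimes> eps \<otimes> DL) \<cdot> (delta \<otimes> \<one> I)"
proof -
  have "(S \<otimes> eps) \<cdot> delta = S"
    using tensor_as_comp[of S eps] by (simp add: eps_delta_right)
  then have "S \<otimes> DL = ((S \<otimes> eps) \<cdot> delta) \<otimes> DL" by simp
  also have "\<dots> = (S \<otimes> eps \<otimes> DL) \<cdot> (delta \<otimes> \<one> I)" by (simp add: comp_tensor_left)
  finally show ?thesis .
qed

lemma mu_S_mu: "mu \<cdot> (S \<otimes> mu) = mu \<cdot> ((mu \<cdot> (S \<otimes> \<one> A)) \<otimes> \<one> A)"
proof -
  have "mu \<cdot> (S \<otimes> mu) = mu \<cdot> (\<one> A \<otimes> mu) \<cdot> (S \<otimes> \<one> (A \<odot> A))"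
    using tensor_as_comp'[of S mu] by simp
  also have "\<dots> = mu \<cdot> (mu \<otimes> \<one> A) \<cdot> (S \<otimes> \<one> (A \<odot> A))"
    by (simp add: comp_eq_extend[OF mu_assoc[symmetric]])
  also have "\<dots> = mu \<cdot> ((mu \<cdot> (S \<otimes> \<one> A)) \<otimes> \<one> A)"
    by (simp add: comp_tensor_left)
  finally show ?thesis .
qed

lemma S_DL_expand:
  "(mu \<otimes> \<one> A) \<cdot> (S \<otimes> DL)
   = (mu \<otimes> mu) \<cdot> ((mu \<cdot> (S \<otimes> \<one> A)) \<otimes> \<one> ((A \<odot> A) \<odot> A)) \<cdot> (\<one> (A \<odot> A) \<otimes> tau \<otimes> \<one> A)
       \<cdot> (\<one> A \<otimes> delta \<otimes> DL) \<cdot> (delta \<otimes> \<one> I)"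
proof -
  have "(mu \<otimes> \<one> A) \<cdot> (S \<otimes> DL)
      = (mu \<otimes> \<one> A) \<cdot> (S \<otimes> ((mu \<otimes> mu) \<cdot> (\<one> A \<otimes> tau \<otimes> \<one> A) \<cdot> (delta \<otimes> DL))) \<cdot> (delta \<otimes> \<one> I)"
    by (simp add: S_DL_counit_expand delta_integral)
  also have "\<dots> = (mu \<otimes> \<one> A) \<cdot> (S \<otimes> mu \<otimes> mu) \<cdot> (\<one> (A \<odot> A) \<otimes> tau \<otimes> \<one> A)
      \<cdot> (\<one> A \<otimes> delta \<otimes> DL) \<cdot> (delta \<otimes> \<one> I)"
    by (simp add: comp_tensor_right)
  also have "\<dots> = ((mu \<cdot> (S \<otimes> mu)) \<otimes> mu) \<cdot> (\<one> (A \<odot> A) \<otimes> tau \<otimes> \<one> A)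
      \<cdot> (\<one> A \<otimes> delta \<otimes> DL) \<cdot> (delta \<otimes> \<one> I)"
    by (subst comp_tensor_left') auto
  also have "\<dots> = ((mu \<cdot> ((mu \<cdot> (S \<otimes> \<one> A)) \<otimes> \<one> A)) \<otimes> mu) \<cdot> (\<one> (A \<odot> A) \<otimes> tau \<otimes> \<one> A)
      \<cdot> (\<one> A \<otimes> delta \<otimes> DL) \<cdot> (delta \<otimes> \<one> I)"
    by (simp only: mu_S_mu)
  also have "\<dots> = (mu \<otimes> mu) \<cdot> ((mu \<cdot> (S \<otimes> \<one> A)) \<otimes> \<one> ((A \<odot> A) \<odot> A)) \<cdot> (\<one> (A \<odot> A) \<otimes> tau \<otimes> \<one> A)
      \<cdot> (\<one> A \<otimes> delta \<otimes> DL) \<cdot> (delta \<otimes> \<one> I)"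
    by (subst comp_tensor_left) auto
  finally show ?thesis .
qed

lemma integral_shift: "(\<one> A \<otimes> mu) \<cdot> (tau \<otimes> \<one> A) \<cdot> (\<one> A \<otimes> DL) = (mu \<otimes> \<one> A) \<cdot> (S \<otimes> DL)"
proof -
  define X where "X = (tau \<otimes> \<one> A) \<cdot> (\<one> A \<otimes> DL)"
  have X_typing [simp]: "Ar X" "Sr X = A \<odot> I" "Tg X = (A \<odot> A) \<odot> A"
    by (auto simp: X_def)
  have coassoc: "(\<one> A \<otimes> delta \<otimes> DL) \<cdot> (delta \<otimes> \<one> I) = (delta \<otimes> \<one> A \<otimes> DL) \<cdot> (delta \<otimes> \<one> I)"
  proof -
    have "(\<one> A \<otimes> delta \<otimes> DL) \<cdot> (delta \<otimes> \<one> I) = ((\<one> A \<otimes> delta) \<cdot> delta) \<otimes> DL"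
      by (simp add: comp_tensor_left)
    also have "\<dots> = (delta \<otimes> \<one> A \<otimes> DL) \<cdot> (delta \<otimes> \<one> I)"
      by (simp add: delta_coassoc[symmetric] comp_tensor_left)
    finally show ?thesis .
  qed
  have swap: "(\<one> (A \<odot> A) \<otimes> tau \<otimes> \<one> A) \<cdot> (delta \<otimes> \<one> A \<otimes> DL) = delta \<otimes> X"
    unfolding X_def by (subst comp_tensor_right') auto
  have antipode: "((mu \<cdot> (S \<otimes> \<one> A)) \<otimes> \<one> ((A \<odot> A) \<odot> A)) \<cdot> (delta \<otimes> X) = (eta \<cdot> eps) \<otimes> X"
    using interchange[of delta "mu \<cdot> (S \<otimes> \<one> A)" X "\<one> ((A \<odot> A) \<odot> A)"]
    by (simp add: antipode_left)
  have unit: "(mu \<otimes> mu) \<cdot> ((eta \<cdot> eps) \<otimes> X) = (\<one> A \<otimes> mu) \<cdot> (eps \<otimes> X)"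
  proof -
    have "(eta \<cdot> eps) \<otimes> X = (eta \<otimes> \<one> ((A \<odot> A) \<odot> A)) \<cdot> (eps \<otimes> X)"
      by (subst comp_tensor_left') auto
    moreover have "(mu \<otimes> mu) \<cdot> (eta \<otimes> \<one> ((A \<odot> A) \<odot> A)) = (mu \<cdot> (eta \<otimes> \<one> A)) \<otimes> mu"
      by (simp add: comp_tensor_left)
    ultimately show ?thesis
      by (simp add: comp_eq_extend[of "mu \<otimes> mu"] mu_eta_left)
  qed
  have counit: "(eps \<otimes> X) \<cdot> (delta \<otimes> \<one> I) = X"
  proof -
    have "eps \<otimes> X = X \<cdot> (eps \<otimes> \<one> (A \<odot> I))"
      using tensor_as_comp'[of eps X] by simp
    moreover have "(eps \<otimes> \<one> (A \<odot> I)) \<cdot> (delta \<otimes> \<one> I) = ((eps \<otimes> \<one> A) \<cdot> delta) \<otimes> \<one> I"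
      by (simp add: comp_tensor_left)
    ultimately show ?thesis by (simp add: eps_delta_left)
  qed
  have "(mu \<otimes> \<one> A) \<cdot> (S \<otimes> DL) = (mu \<otimes> mu) \<cdot> ((eta \<cdot> eps) \<otimes> X) \<cdot> (delta \<otimes> \<one> I)"
    by (simp add: S_DL_expand coassoc comp_eq_extend[OF swap] comp_eq_extend[OF antipode])
  also have "\<dots> = (\<one> A \<otimes> mu) \<cdot> X"
    by (simp add: comp_eq_extend[OF unit] counit)
  finally show ?thesis by (simp add: X_def)
qed

lemma pairing_S_DL: "(\<one> A \<otimes> l) \<cdot> (\<one> A \<otimes> mu) \<cdot> (tau \<otimes> \<one> A) \<cdot> (S \<otimes> DL) = twist"
proof -
  have split: "S \<otimes> DL = (\<one> A \<otimes> DL) \<cdot> (S \<otimes> \<one> I)"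
    using tensor_as_comp'[of S DL] by simp
  have involution: "(S \<otimes> DL) \<cdot> (S \<otimes> \<one> I) = \<one> A \<otimes> DL"
    using interchange[of S S "\<one> I" DL] by (simp add: S_S)
  have slide: "(\<one> A \<otimes> l) \<cdot> (mu \<otimes> \<one> A) = (mu \<otimes> \<one> I) \<cdot> (\<one> (A \<odot> A) \<otimes> l)"
    using tensor_slide[of mu l] by simp
  have "(\<one> A \<otimes> l) \<cdot> (\<one> A \<otimes> mu) \<cdot> (tau \<otimes> \<one> A) \<cdot> (S \<otimes> DL)
      = (\<one> A \<otimes> l) \<cdot> ((\<one> A \<otimes> mu) \<cdot> (tau \<otimes> \<one> A) \<cdot> (\<one> A \<otimes> DL)) \<cdot> (S \<otimes> \<one> I)"
    unfolding split by simp
  also have "\<dots> = (\<one> A \<otimes> l) \<cdot> (mu \<otimes> \<one> A) \<cdot> (S \<otimes> DL) \<cdot> (S \<otimes> \<one> I)"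
    unfolding integral_shift by simp
  also have "\<dots> = (mu \<otimes> \<one> I) \<cdot> (\<one> (A \<odot> A) \<otimes> l) \<cdot> (\<one> A \<otimes> DL)"
    by (simp add: involution comp_eq_extend[OF slide])
  also have "\<dots> = twist"
    by (simp add: twist_def coact_def comp_tensor_right)
  finally show ?thesis .
qed

lemma pairing_DL_S: "(\<one> A \<otimes> (l \<cdot> mu \<cdot> tau)) \<cdot> (DL \<otimes> S) \<cdot> symm C A I = twist"
proof -
  have natural: "symm C A (A \<odot> A) \<cdot> (S \<otimes> DL) = (DL \<otimes> S) \<cdot> symm C A I"
    using symm_natural[of S A A DL I "A \<odot> A"] by (simp add: hom_iff)
  have hexagon: "symm C A (A \<odot> A) = (\<one> A \<otimes> tau) \<cdot> (tau \<otimes> \<one> A)"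
    using symm_hexagon[of A A A] by simp
  have "(\<one> A \<otimes> (l \<cdot> mu \<cdot> tau)) \<cdot> (DL \<otimes> S) \<cdot> symm C A I
      = (\<one> A \<otimes> (l \<cdot> mu \<cdot> tau)) \<cdot> (\<one> A \<otimes> tau) \<cdot> (tau \<otimes> \<one> A) \<cdot> (S \<otimes> DL)"
    by (simp add: natural[symmetric] hexagon)
  also have "\<dots> = (\<one> A \<otimes> (l \<cdot> mu \<cdot> tau \<cdot> tau)) \<cdot> (tau \<otimes> \<one> A) \<cdot> (S \<otimes> DL)"
    by (simp add: comp_tensor_right)
  also have "\<dots> = (\<one> A \<otimes> l) \<cdot> (\<one> A \<otimes> mu) \<cdot> (tau \<otimes> \<one> A) \<cdot> (S \<otimes> DL)"
    using symm_inv[of A A] by (simp add: comp_tensor_right)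
  also have "\<dots> = twist"
    by (rule pairing_S_DL)
  finally show ?thesis .
qed

definition "Phi P = (\<one> I \<otimes> (l \<cdot> mu \<cdot> tau)) \<cdot> (P \<otimes> S) \<cdot> (\<one> A \<otimes> symm C A I)"

lemma Phi_Psi:
  assumes "e \<in> hom C (A \<odot> A) I"
  shows "Phi (Psi C A delta L e) = (e \<otimes> \<one> I) \<cdot> (\<one> A \<otimes> twist)"
proof -
  have e: "Ar e" "Sr e = A \<odot> A" "Tg e = I" using assms by (auto simp: hom_iff)
  have Psi_S: "Psi C A delta L e \<otimes> S = (e \<otimes> \<one> (A \<odot> A)) \<cdot> (\<one> A \<otimes> DL \<otimes> S)"
    unfolding Psi_def DL_def using e by (subst comp_tensor_left') auto
  have slide: "(\<one> I \<otimes> (l \<cdot> mu \<cdot> tau)) \<cdot> (e \<otimes> \<one> (A \<odot> A))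
      = (e \<otimes> \<one> I) \<cdot> (\<one> (A \<odot> A) \<otimes> (l \<cdot> mu \<cdot> tau))"
    using tensor_slide[of e "l \<cdot> mu \<cdot> tau"] e by simp
  have "Phi (Psi C A delta L e)
      = (e \<otimes> \<one> I) \<cdot> (\<one> (A \<odot> A) \<otimes> (l \<cdot> mu \<cdot> tau)) \<cdot> (\<one> A \<otimes> DL \<otimes> S) \<cdot> (\<one> A \<otimes> symm C A I)"
    unfolding Phi_def Psi_S using e by (simp add: comp_eq_extend[OF slide])
  also have "\<dots> = (e \<otimes> \<one> I) \<cdot> (\<one> A \<otimes> ((\<one> A \<otimes> (l \<cdot> mu \<cdot> tau)) \<cdot> (DL \<otimes> S) \<cdot> symm C A I))"
    using e by (simp add: comp_tensor_right)
  finally show ?thesis by (simp only: pairing_DL_S)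
qed

lemma Psi_determines_tensor_ident:
  assumes e: "e \<in> hom C (A \<odot> A) I" and e': "e' \<in> hom C (A \<odot> A) I"
    and eq: "Psi C A delta L e = Psi C A delta L e'"
  shows "e \<otimes> \<one> I = e' \<otimes> \<one> I"
proof -
  have "(\<one> A \<otimes> twist) \<cdot> (\<one> A \<otimes> twist_inv) = \<one> A \<otimes> (twist \<cdot> twist_inv)"
    by (simp add: comp_tensor_right)
  then have cancel: "((f \<otimes> \<one> I) \<cdot> (\<one> A \<otimes> twist)) \<cdot> (\<one> A \<otimes> twist_inv) = f \<otimes> \<one> I"
    if "f \<in> hom C (A \<odot> A) I" for f
    using that by (simp add: hom_iff twist_twist_inv)
  show ?thesis
    using cancel[OF e] cancel[OF e'] Phi_Psi[OF e] Phi_Psi[OF e'] eq by metis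
qed

end

theorem mainTheorem6:
  fixes C :: "('o, 'm) smc"
    and A I :: 'o
    and mu eta delta eps S L l :: 'm
  assumes "ssmc C"
    and "involutory_hopf C A mu eta delta eps S"
    and "invertible_obj C I"
    and "universal_left_integral C A mu eps I L"
    and "universal_right_cointegral C A delta eta I l"
    and "cmp C l L = ident C I"
  shows "inj_on (Psi C A delta L) (hom C (otensor C A A) I)"
proof (rule inj_onI)
  interpret hopf_integrals C A I mu eta delta eps S L l
    using assms unfolding hopf_integrals_def hopf_integrals_axioms_def universal_left_integral_def
    by blast
  fix e e' assume e: "e \<in> hom C (A \<odot> A) I" and e': "e' \<in> hom C (A \<odot> A) I"
    and "Psi C A delta L e = Psi C A delta L e'"
  then have "e \<otimes> \<one> I = e' \<otimes> \<one> I"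
    by (rule Psi_determines_tensor_ident)
  then show "e = e'"
    using tensor_invertible_cancel[OF assms(3) e e'] by blast
qed

end
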